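(* The equation $x+y=z$ with $x,y,z\in\mathcal{B}_{2,1}$ and $x\le y$ has exactly four solutions: $$x=2-\sqrt3=[3,\overline{1,2}],\ y=\tfrac{\sqrt3-1}{2}=[\overline{2,1}],\ z=\tfrac{3-\sqrt3}{2}=[1,1,1,\overline{2,1}];$$ $$x=y=\tfrac{\sqrt3-1}{2}=[\overline{2,1}],\ z=\sqrt3-1=[\overline{1,2}];$$ $$x=y=\tfrac{2-\sqrt2}{2}=[3,\overline{2}],\ z=2-\sqrt2=[1,1,\overline{2}];$$ $$x=\tfrac{2-\sqrt2}{2}=[3,\overline{2}],\ y=\sqrt2-1=[\overline{2}],\ z=\tfrac{\sqrt2}{2}=[1,\overline{2}].$$
   Context: For irrational $x\in(0,1)$, $x=[a_1(x),a_2(x),\dots]$ denotes its simple continued fraction expansion; an overline denotes a periodically repeated block. For a positive integer $B$ and $j\ge0$, $\mathcal{B}_{B,j}$ is the set of irrational $x\in(0,1)$ with $a_k(x)\le B+1$ for all $k\le j$ and $a_k(x)\le B$ for all $k>j$. Thus $\mathcal{B}_{2,1}$ consists of the irrationals $x\in(0,1)$ with $a_1(x)\le3$ and $a_k(x)\le2$ for all $k\ge2$. *)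

theory Defs
  imports "HOL-Analysis.Analysis"
begin

definition gauss :: "real \<Rightarrow> real" where
  "gauss x = 1 / x - of_int \<lfloor>1 / x\<rfloor>"

definition cf_digit :: "real \<Rightarrow> nat \<Rightarrow> int" where
  "cf_digit x k = \<lfloor>1 / ((gauss ^^ (k - 1)) x)\<rfloor>"

definition bounded_cf :: "nat \<Rightarrow> nat \<Rightarrow> real set" where
  "bounded_cf B j = {x. x \<notin> \<rat> \<and> 0 < x \<and> x < 1 \<and>
      (\<forall>k. 1 \<le> k \<and> k \<le> j \<longrightarrow> cf_digit x k \<le> int B + 1) \<and>
      (\<forall>k. k > j \<longrightarrow> cf_digit x k \<le> int B)}"

end

theory Submission
  imports Defs "HOL-Computational_Algebra.Primes"
begin

(* Every element of B_{2,1} is 1/(a + g) with a in {1,2,3} and g in B_{2,0}, and B_{2,0} lies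
   between (sqrt 3 - 1)/2 = [2,1,2,1,...] and sqrt 3 - 1 = [1,2,1,2,...].  Size estimates force z
   to have first digit 1 and leave three digit patterns for (x, y).  The extremal points of B_{2,0}
   settle part of the cases; the rest reduce to 1/(3+a) + 1/(3+b) + 1/(2+d) = 1 with
   a, b, d in B_{2,0}.  In the Koenigs coordinate of t -> 1/(2+t), whose attracting fixed point
   is sqrt 2 - 1 = [2,2,...], this equation is almost linear: a numerical estimate shows that it
   forces the first digits of a, b, d to be 2, and removing these digits gives an equation of the
   same shape with a parameter scaled by -(sqrt 2 - 1)^2.  Iterating, the Koenigs coordinates of
   a, b, d are at most (sqrt 2 - 1)^(2n) in absolute value for every n, so
   a = b = d = sqrt 2 - 1. *)

section \<open>Continued fraction digits\<close>

lemma cf_digit_1 [simp]: "cf_digit x 1 = \<lfloor>1 / x\<rfloor>"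
  by (simp add: cf_digit_def)

lemma cf_digit_Suc: "1 \<le> k \<Longrightarrow> cf_digit x (Suc k) = cf_digit (gauss x) k"
  by (cases k) (simp_all add: cf_digit_def funpow_Suc_right del: funpow.simps)

lemma recip_add_gauss: "x = 1 / (of_int \<lfloor>1 / x\<rfloor> + gauss x)"
  by (simp add: gauss_def)

lemma gauss_nonneg: "0 \<le> gauss x" and gauss_less_1: "gauss x < 1"
  unfolding gauss_def by linarith+

lemma floor_recip_ge_1: "0 < x \<Longrightarrow> x < 1 \<Longrightarrow> 1 \<le> \<lfloor>1 / x\<rfloor>"
  by (simp add: le_floor_iff le_divide_eq)

lemma floor_recip_recip_add:
  fixes g :: real
  assumes "0 \<le> g" "g < 1"
  shows "\<lfloor>1 / (1 / (of_int a + g))\<rfloor> = a"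
  using assms by (simp add: floor_unique)

lemma gauss_recip_add:
  fixes g :: real
  assumes "0 \<le> g" "g < 1"
  shows "gauss (1 / (of_int a + g)) = g"
  using floor_recip_recip_add[OF assms] by (simp add: gauss_def)

lemma recip_add_Rats_iff: "1 / (of_int a + g) \<in> \<rat> \<longleftrightarrow> g \<in> \<rat>"
proof
  assume "1 / (of_int a + g) \<in> \<rat>"
  then have "1 / (1 / (of_int a + g)) - of_int a \<in> \<rat>"
    by (simp only: Rats_diff Rats_divide Rats_1 Rats_of_int)
  then show "g \<in> \<rat>" by simp
qed simp

lemma gauss_Rats_iff: "0 < x \<Longrightarrow> gauss x \<in> \<rat> \<longleftrightarrow> x \<in> \<rat>"
  by (metis recip_add_Rats_iff recip_add_gauss)

lemma recip_add_in_unit_interval: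
  fixes g :: real
  assumes "0 < g" "1 \<le> a"
  shows "0 < 1 / (of_int a + g)" "1 / (of_int a + g) < 1"
  using assms by (simp_all add: divide_less_eq)

lemma bounded_cf_altdef:
  "x \<in> bounded_cf B j \<longleftrightarrow>
     x \<notin> \<rat> \<and> 0 < x \<and> x < 1 \<and> (\<forall>k\<ge>1. cf_digit x k \<le> int B + of_bool (k \<le> j))"
  unfolding bounded_cf_def by (auto simp: not_le)

lemma bounded_cf_iff:
  "x \<in> bounded_cf B j \<longleftrightarrow>
     (\<exists>a g. 1 \<le> a \<and> a \<le> int B + of_bool (j \<noteq> 0) \<and> g \<in> bounded_cf B (j - 1)
        \<and> x = 1 / (of_int a + g))"
proof
  assume x: "x \<in> bounded_cf B j"
  then have x01: "x \<notin> \<rat>" "0 < x" "x < 1"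
    and digits: "\<And>k. 1 \<le> k \<Longrightarrow> cf_digit x k \<le> int B + of_bool (k \<le> j)"
    by (auto simp: bounded_cf_altdef)
  have "gauss x \<notin> \<rat>" using x01 by (simp add: gauss_Rats_iff)
  then have "0 < gauss x" using gauss_nonneg[of x] by (metis Rats_0 order_le_less)
  moreover have "cf_digit (gauss x) k \<le> int B + of_bool (k \<le> j - 1)" if "1 \<le> k" for k
    using digits[of "Suc k"] that by (auto simp: cf_digit_Suc of_bool_def split: if_splits)
  ultimately have "gauss x \<in> bounded_cf B (j - 1)"
    using \<open>gauss x \<notin> \<rat>\<close> gauss_less_1 by (simp add: bounded_cf_altdef)
  moreover have "\<lfloor>1 / x\<rfloor> \<le> int B + of_bool (j \<noteq> 0)"
    using digits[of 1] unfolding cf_digit_1 by (simp add: Suc_le_eq)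
  ultimately show "\<exists>a g. 1 \<le> a \<and> a \<le> int B + of_bool (j \<noteq> 0) \<and> g \<in> bounded_cf B (j - 1)
        \<and> x = 1 / (of_int a + g)"
    using floor_recip_ge_1[OF x01(2,3)] recip_add_gauss by blast
next
  assume "\<exists>a g. 1 \<le> a \<and> a \<le> int B + of_bool (j \<noteq> 0) \<and> g \<in> bounded_cf B (j - 1)
        \<and> x = 1 / (of_int a + g)"
  then obtain a g where a: "1 \<le> a" "a \<le> int B + of_bool (j \<noteq> 0)"
    and g: "g \<in> bounded_cf B (j - 1)" and x: "x = 1 / (of_int a + g)"
    by blast
  from g have g01: "g \<notin> \<rat>" "0 < g" "g < 1"
    and digits: "\<And>k. 1 \<le> k \<Longrightarrow> cf_digit g k \<le> int B + of_bool (k \<le> j - 1)"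
    by (auto simp: bounded_cf_altdef)
  have "cf_digit x k \<le> int B + of_bool (k \<le> j)" if k: "1 \<le> k" for k
  proof (cases "k = 1")
    case True
    show ?thesis unfolding True cf_digit_1 x
      using a g01 floor_recip_recip_add[of g a] by (auto simp: of_bool_def split: if_splits)
  next
    case False
    then obtain i where "k = Suc i" "1 \<le> i" using k by (cases k) auto
    then show ?thesis
      using digits[of i] g01
      by (auto simp: x cf_digit_Suc gauss_recip_add of_bool_def split: if_splits)
  qed
  then show "x \<in> bounded_cf B j"
    using g01 a recip_add_in_unit_interval[of g a]
    by (simp add: bounded_cf_altdef x recip_add_Rats_iff)
qed

lemma bounded_cf_pos: "x \<in> bounded_cf B j \<Longrightarrow> 0 < x"
  by (simp add: bounded_cf_def)

lemma bounded_cf_mono: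
  assumes "j \<le> j'" shows "bounded_cf B j \<subseteq> bounded_cf B j'"
proof -
  have "(of_bool (k \<le> j) :: int) \<le> of_bool (k \<le> j')" for k
    using assms by auto
  then show ?thesis unfolding bounded_cf_altdef subset_iff by (meson order_trans add_left_mono)
qed

lemma bounded_cf_2_0_cases:
  assumes "x \<in> bounded_cf 2 0"
  obtains g where "g \<in> bounded_cf 2 0" "x = 1 / (1 + g) \<or> x = 1 / (2 + g)"
proof -
  obtain a g where "1 \<le> a" "a \<le> 2" "g \<in> bounded_cf 2 0" "x = 1 / (of_int a + g)"
    using assms bounded_cf_iff[of x 2 0] by auto
  moreover from this have "a = 1 \<or> a = 2" by linarith
  ultimately show thesis using that by auto
qed

lemma bounded_cf_2_1_cases:
  assumes "x \<in> bounded_cf 2 1"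
  obtains g where "g \<in> bounded_cf 2 0" "x = 1 / (1 + g) \<or> x = 1 / (2 + g) \<or> x = 1 / (3 + g)"
proof -
  obtain a g where "1 \<le> a" "a \<le> 3" "g \<in> bounded_cf 2 0" "x = 1 / (of_int a + g)"
    using assms bounded_cf_iff[of x 2 1] by auto
  moreover from this have "a = 1 \<or> a = 2 \<or> a = 3" by linarith
  ultimately show thesis using that by auto
qed

lemma recip_add_mem_bounded_cf:
  assumes "g \<in> bounded_cf 2 0"
  shows "1 / (1 + g) \<in> bounded_cf 2 0" "1 / (2 + g) \<in> bounded_cf 2 0" "1 / (3 + g) \<in> bounded_cf 2 1"
proof -
  have "1 / (of_int a + g) \<in> bounded_cf 2 j" if "1 \<le> a" "a \<le> 2 + of_bool (j \<noteq> 0)" "j \<le> 1" for a j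
  proof -
    have "g \<in> bounded_cf 2 (j - 1)" using assms \<open>j \<le> 1\<close> by (simp add: diff_is_0_eq')
    with that(1,2) show ?thesis
      unfolding bounded_cf_iff[of _ 2 j] by fastforce
  qed
  from this[of 1 0] this[of 2 0] this[of 3 1] show
    "1 / (1 + g) \<in> bounded_cf 2 0" "1 / (2 + g) \<in> bounded_cf 2 0" "1 / (3 + g) \<in> bounded_cf 2 1"
    by simp_all
qed

lemma bounded_cf_coinduct:
  assumes "t \<in> S"
    and irrational: "\<And>t. t \<in> S \<Longrightarrow> t \<notin> \<rat> \<and> 0 < t \<and> t < 1"
    and step: "\<And>t. t \<in> S \<Longrightarrow> \<exists>a g. a \<le> int B \<and> g \<in> S \<and> t = 1 / (of_int a + g)"
  shows "t \<in> bounded_cf B 0"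
proof -
  have closed: "gauss s \<in> S" and digit: "\<lfloor>1 / s\<rfloor> \<le> int B" if s: "s \<in> S" for s
  proof -
    obtain a g where "a \<le> int B" "g \<in> S" "s = 1 / (of_int a + g)"
      using step[OF s] by blast
    with irrational[of g] show "gauss s \<in> S" "\<lfloor>1 / s\<rfloor> \<le> int B"
      by (simp_all only: gauss_recip_add floor_recip_recip_add less_imp_le)
  qed
  have "(gauss ^^ n) t \<in> S" for n
    by (induction n) (use assms closed in auto)
  then have "cf_digit t k \<le> int B" for k
    unfolding cf_digit_def using digit by blast
  then show ?thesis using irrational[OF \<open>t \<in> S\<close>] by (simp add: bounded_cf_def)
qed

section \<open>Quadratic irrationals in bounded_cf 2 0\<close>

lemma sqrt_prime_irrational:
  assumes "prime (p :: nat)" shows "sqrt p \<notin> \<rat>"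
proof
  assume "sqrt p \<in> \<rat>"
  then obtain m n :: nat where n: "n \<noteq> 0" and mn: "\<bar>sqrt p\<bar> = m / n" and "coprime m n"
    by (rule Rats_abs_nat_div_natE)
  have "real (m * m) = real (p * (n * n))"
    using arg_cong[OF mn, of "\<lambda>x. x * x * n * n"] n by (simp add: field_simps)
  then have eq: "m * m = p * (n * n)" by (simp only: of_nat_eq_iff)
  then have "p dvd m" using assms prime_dvd_mult_nat by (metis dvd_triv_left)
  then obtain k where "m = p * k" by blast
  with eq have "p * (k * k) = n * n" using assms by (simp add: prime_gt_0_nat algebra_simps)
  then have "p dvd n" using assms prime_dvd_mult_nat by (metis dvd_triv_left)
  with \<open>p dvd m\<close> \<open>coprime m n\<close> assms show False
    by (metis coprime_common_divisor_nat not_prime_1)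
qed

lemma sqrt_2_irrational: "sqrt 2 \<notin> \<rat>" and sqrt_3_irrational: "sqrt 3 \<notin> \<rat>"
  using sqrt_prime_irrational[of 2] sqrt_prime_irrational[of 3] by simp_all

lemma sqrt_2_bounds: "141421 / 100000 < sqrt 2" "sqrt 2 < 141422 / 100000"
  by (rule real_less_rsqrt real_less_lsqrt; simp add: power2_eq_square)+

lemma sqrt_3_bounds: "173205 / 100000 < sqrt 3" "sqrt 3 < 173206 / 100000"
  by (rule real_less_rsqrt real_less_lsqrt; simp add: power2_eq_square)+

lemma bounded_cf_two_cycle:
  fixes a b :: int
  assumes "x \<notin> \<rat>" "0 < x" "x < 1" "y \<notin> \<rat>" "0 < y" "y < 1"
    and "x = 1 / (of_int a + y)" "y = 1 / (of_int b + x)"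
    and "a \<le> int B" "b \<le> int B"
  shows "x \<in> bounded_cf B 0"
proof (rule bounded_cf_coinduct[where S = "{x, y}"])
  fix t assume t: "t \<in> {x, y}"
  then show "t \<notin> \<rat> \<and> 0 < t \<and> t < 1"
    using assms(1-6) by blast
  show "\<exists>a g. a \<le> int B \<and> g \<in> {x, y} \<and> t = 1 / (of_int a + g)"
  proof (cases "t = x")
    case True
    then show ?thesis using assms(7,9) by (intro exI[of _ a] exI[of _ y]) simp
  next
    case False
    then show ?thesis using t assms(8,10) by (intro exI[of _ b] exI[of _ x]) simp
  qed
qed simp

lemma silver_mem_bounded_cf: "sqrt 2 - 1 \<in> bounded_cf 2 0"
proof -
  have eq: "sqrt 2 - 1 = 1 / (of_int 2 + (sqrt 2 - 1))"
    using sqrt_2_bounds by (simp add: eq_divide_eq algebra_simps)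
  have irr: "sqrt 2 - 1 \<notin> \<rat>"
    using sqrt_2_irrational Rats_add[OF _ Rats_1, of "sqrt 2 - 1"] by auto
  show ?thesis
    by (rule bounded_cf_two_cycle[OF irr _ _ irr _ _ eq eq]) (use sqrt_2_bounds in auto)
qed

lemma sqrt_3_cycle_mem_bounded_cf:
  "(sqrt 3 - 1) / 2 \<in> bounded_cf 2 0" "sqrt 3 - 1 \<in> bounded_cf 2 0"
proof -
  have eq1: "(sqrt 3 - 1) / 2 = 1 / (of_int 2 + (sqrt 3 - 1))"
    using sqrt_3_bounds by (simp add: field_simps)
  have eq2: "sqrt 3 - 1 = 1 / (of_int 1 + (sqrt 3 - 1) / 2)"
    using sqrt_3_bounds by (simp add: field_simps)
  have irr1: "(sqrt 3 - 1) / 2 \<notin> \<rat>"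
  proof
    assume "(sqrt 3 - 1) / 2 \<in> \<rat>"
    then have "2 * ((sqrt 3 - 1) / 2) + 1 \<in> \<rat>" by (intro Rats_add Rats_mult) simp_all
    also have "2 * ((sqrt 3 - 1) / 2) + 1 = sqrt 3" by (simp add: field_simps)
    finally show False using sqrt_3_irrational by simp
  qed
  have irr2: "sqrt 3 - 1 \<notin> \<rat>"
    using sqrt_3_irrational Rats_add[OF _ Rats_1, of "sqrt 3 - 1"] by auto
  show "(sqrt 3 - 1) / 2 \<in> bounded_cf 2 0"
    by (rule bounded_cf_two_cycle[OF irr1 _ _ irr2 _ _ eq1 eq2]) (use sqrt_3_bounds in auto)
  show "sqrt 3 - 1 \<in> bounded_cf 2 0"
    by (rule bounded_cf_two_cycle[OF irr2 _ _ irr1 _ _ eq2 eq1]) (use sqrt_3_bounds in auto)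
qed

lemma bounded_cf_2_0_bounds:
  assumes "t \<in> bounded_cf 2 0"
  shows "(sqrt 3 - 1) / 2 \<le> t" "t \<le> sqrt 3 - 1"
proof -
  define E where "E = bounded_cf 2 0"
  define m where "m = Inf E"
  define M where "M = Sup E"
  have unit: "0 < s \<and> s < 1" if "s \<in> E" for s
    using that by (simp add: E_def bounded_cf_def)
  have "E \<noteq> {}" using silver_mem_bounded_cf by (auto simp: E_def)
  have "bdd_below E" "bdd_above E"
    using unit by (meson bdd_below_def bdd_above_def less_imp_le)+
  then have m_le: "m \<le> s" and le_M: "s \<le> M" if "s \<in> E" for s
    using that by (simp_all add: m_def M_def cInf_lower cSup_upper)
  have "0 \<le> m" unfolding m_def using \<open>E \<noteq> {}\<close> unit by (meson cInf_greatest less_imp_le)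
  have "1 / (2 + M) \<le> s" "s \<le> 1 / (1 + m)" if "s \<in> E" for s
  proof -
    obtain g where g: "g \<in> E" "s = 1 / (1 + g) \<or> s = 1 / (2 + g)"
      using \<open>s \<in> E\<close> bounded_cf_2_0_cases unfolding E_def by blast
    have "1 / (2 + M) \<le> 1 / (2 + g)" "1 / (2 + g) \<le> 1 / (1 + g)" "1 / (1 + g) \<le> 1 / (1 + m)"
      using m_le[OF g(1)] le_M[OF g(1)] unit[OF g(1)] \<open>0 \<le> m\<close> by (intro frac_le; simp)+
    with g(2) show "1 / (2 + M) \<le> s" "s \<le> 1 / (1 + m)" by auto
  qed
  then have lower: "1 / (2 + M) \<le> m" and upper: "M \<le> 1 / (1 + m)"
    unfolding m_def M_def using \<open>E \<noteq> {}\<close> by (simp_all add: cInf_greatest cSup_least)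
  have "0 \<le> M" using \<open>0 \<le> m\<close> m_le le_M \<open>E \<noteq> {}\<close> by (meson all_not_in_conv order_trans)
  then have "1 / (2 + 1 / (1 + m)) \<le> 1 / (2 + M)"
    using upper \<open>0 \<le> m\<close> by (intro frac_le) auto
  with lower have "1 / (2 + 1 / (1 + m)) \<le> m" by linarith
  then have "1 + m \<le> m * (3 + 2 * m)"
    using \<open>0 \<le> m\<close> by (simp add: field_simps)
  then have "3 \<le> (2 * m + 1)\<^sup>2"
    by (simp add: power2_eq_square algebra_simps)
  then have "sqrt 3 \<le> 2 * m + 1"
    using \<open>0 \<le> m\<close> by (intro real_le_lsqrt) auto
  then have m_ge: "(sqrt 3 - 1) / 2 \<le> m" by simp
  have "1 / (1 + m) \<le> 1 / (1 + (sqrt 3 - 1) / 2)"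
    using m_ge sqrt_3_bounds by (intro frac_le) (simp_all add: field_simps)
  with upper have "M \<le> 1 / (1 + (sqrt 3 - 1) / 2)" by linarith
  also have "\<dots> = sqrt 3 - 1"
    using sqrt_3_bounds by (simp add: field_simps)
  finally show "(sqrt 3 - 1) / 2 \<le> t" "t \<le> sqrt 3 - 1"
    using m_ge m_le le_M assms unfolding E_def by (auto intro: order_trans)
qed

section \<open>The Koenigs coordinate of t \<mapsto> 1 / (2 + t)\<close>

(* Moebius map sending the fixed points sqrt 2 - 1 and -(sqrt 2 + 1) of t -> 1/(2+t) to 0 and
   infinity; it conjugates that map to multiplication by its multiplier -(sqrt 2 - 1)^2. *)
definition koenigs :: "real \<Rightarrow> real" where
  "koenigs t = (t - (sqrt 2 - 1)) / (t + (sqrt 2 + 1))"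

lemma koenigs_denom_pos: "0 \<le> t \<Longrightarrow> 0 < t + (sqrt 2 + 1)"
  using sqrt_2_bounds by linarith

lemma koenigs_recip_two_add:
  assumes "0 \<le> t"
  shows "koenigs (1 / (2 + t)) = - (sqrt 2 - 1)\<^sup>2 * koenigs t"
proof -
  have "2 + t \<noteq> 0" "sqrt 2 + 1 \<noteq> 0"
    using assms sqrt_2_bounds by auto
  have num: "1 - (sqrt 2 - 1) * (2 + t) = - (sqrt 2 - 1) * (t - (sqrt 2 - 1))"
    by (simp add: algebra_simps)
  have den: "1 + (sqrt 2 + 1) * (2 + t) = (sqrt 2 + 1) * (t + (sqrt 2 + 1))"
    by (simp add: algebra_simps)
  have "koenigs (1 / (2 + t)) = (1 - (sqrt 2 - 1) * (2 + t)) / (1 + (sqrt 2 + 1) * (2 + t))"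
    using \<open>2 + t \<noteq> 0\<close> by (simp add: koenigs_def divide_simps)
  also have "\<dots> = - ((sqrt 2 - 1) / (sqrt 2 + 1)) * koenigs t"
    unfolding num den koenigs_def by (simp only: times_divide_times_eq mult_minus_left)
  also have "(sqrt 2 - 1) / (sqrt 2 + 1) = (sqrt 2 - 1)\<^sup>2"
    using \<open>sqrt 2 + 1 \<noteq> 0\<close> by (simp add: divide_simps power2_eq_square algebra_simps)
  finally show ?thesis by simp
qed

lemma koenigs_eq_0_iff: "0 \<le> t \<Longrightarrow> koenigs t = 0 \<longleftrightarrow> t = sqrt 2 - 1"
  using koenigs_denom_pos[of t] by (auto simp: koenigs_def)

lemma koenigs_eq: "0 \<le> t \<Longrightarrow> koenigs t = 1 - 2 * sqrt 2 / (t + (sqrt 2 + 1))"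
  using koenigs_denom_pos[of t] by (simp add: koenigs_def field_simps)

lemma koenigs_mono: "0 \<le> s \<Longrightarrow> s \<le> t \<Longrightarrow> koenigs s \<le> koenigs t"
  using koenigs_denom_pos[of s] by (simp add: koenigs_eq divide_left_mono)

lemma abs_koenigs_le_1: "0 \<le> t \<Longrightarrow> \<bar>koenigs t\<bar> \<le> 1"
  using koenigs_denom_pos[of t] by (simp add: koenigs_eq abs_le_iff divide_le_eq)

definition defect :: "real \<Rightarrow> real \<Rightarrow> real \<Rightarrow> real" where
  "defect n e p = p / ((n + sqrt 2 - 1) * (n + sqrt 2 - 1 + (sqrt 2 + 1 - n) * e * p))"

lemma recip_add_eq_defect:
  assumes "0 \<le> t" "1 \<le> n"
  shows "1 / (n + t) = 1 / (n + sqrt 2 - 1) - 2 * sqrt 2 * defect n 1 (koenigs t)"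
proof -
  have nz: "n + t \<noteq> 0" "n + sqrt 2 - 1 \<noteq> 0" "t + (sqrt 2 + 1) \<noteq> 0" "sqrt 2 \<noteq> 0"
    using assms koenigs_denom_pos[OF assms(1)] sqrt_2_bounds by auto
  have "n + sqrt 2 - 1 + (sqrt 2 + 1 - n) * koenigs t
      = ((n + sqrt 2 - 1) * (t + (sqrt 2 + 1)) + (sqrt 2 + 1 - n) * (t - (sqrt 2 - 1)))
        / (t + (sqrt 2 + 1))"
    using nz by (simp add: koenigs_def field_simps)
  also have "(n + sqrt 2 - 1) * (t + (sqrt 2 + 1)) + (sqrt 2 + 1 - n) * (t - (sqrt 2 - 1))
      = 2 * sqrt 2 * (n + t)"
    by (simp add: algebra_simps)
  finally have "2 * sqrt 2 * defect n 1 (koenigs t)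
      = (t - (sqrt 2 - 1)) / ((n + sqrt 2 - 1) * (n + t))"
    using nz by (simp add: defect_def koenigs_def)
  also have "\<dots> = 1 / (n + sqrt 2 - 1) - 1 / (n + t)"
    using nz by (simp add: field_simps)
  finally show ?thesis by simp
qed

lemma defect_scale: "defect n e (k * p) = k * defect n (k * e) p"
  by (simp add: defect_def mult_ac)

lemma recip_diff_le_frac:
  fixes A D p :: real
  assumes "\<bar>D\<bar> \<le> 1" "\<bar>p\<bar> < A"
  shows "1 / A - 1 / (A + p) \<le> p / (A * (A + D * p))"
proof -
  have "\<bar>D * p\<bar> \<le> \<bar>p\<bar>"
    using assms(1) by (simp add: abs_mult mult_left_le_one_le)
  then have pos: "0 < A" "0 < A + p" "0 < A + D * p"
    using assms(2) by linarith+
  have "1 / A - 1 / (A + p) = p / (A * (A + p))"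
    using pos by (simp add: field_simps)
  moreover have "p / (A * (A + D * p)) - p / (A * (A + p))
      = (1 - D) * p\<^sup>2 / (A * (A + D * p) * (A + p))"
    using pos by (simp add: divide_simps) (simp add: algebra_simps power2_eq_square)
  moreover have "0 \<le> (1 - D) * p\<^sup>2 / (A * (A + D * p) * (A + p))"
    using pos assms(1) by simp
  ultimately show ?thesis by simp
qed

lemma defect_lower_bound:
  assumes "\<bar>(sqrt 2 + 1 - n) * e\<bar> \<le> 1" "\<bar>p\<bar> < n + sqrt 2 - 1"
  shows "1 / (n + sqrt 2 - 1) - 1 / (n + sqrt 2 - 1 + p) \<le> defect n e p"
  using recip_diff_le_frac[OF assms] by (simp add: defect_def mult.assoc)

(* For e = 1 this is the equation 1/(3+a) + 1/(3+b) + 1/(2+d) = 1 (koenigs_equation_1); peeling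
   a leading digit 2 off a, b and d multiplies e by -(sqrt 2 - 1)^2 (koenigs_equation_pullback). *)
definition koenigs_equation :: "real \<Rightarrow> real \<Rightarrow> real \<Rightarrow> real \<Rightarrow> bool" where
  "koenigs_equation e a b d \<longleftrightarrow>
     defect 3 e (koenigs a) + defect 3 e (koenigs b) + defect 2 e (koenigs d) = 0"

lemma koenigs_equation_1:
  assumes "0 \<le> a" "0 \<le> b" "0 \<le> d" "1 / (3 + a) + 1 / (3 + b) + 1 / (2 + d) = 1"
  shows "koenigs_equation 1 a b d"
proof -
  have "2 / (3 + sqrt 2 - 1) + 1 / (2 + sqrt 2 - 1) = 1"
    using sqrt_2_bounds by (simp add: field_simps add_pos_pos)
  with assms recip_add_eq_defect[of a 3] recip_add_eq_defect[of b 3] recip_add_eq_defect[of d 2]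
  have "2 * sqrt 2 * (defect 3 1 (koenigs a) + defect 3 1 (koenigs b) + defect 2 1 (koenigs d)) = 0"
    by (simp add: algebra_simps)
  then show ?thesis by (simp add: koenigs_equation_def)
qed

lemma koenigs_equation_pullback:
  assumes "0 \<le> a" "0 \<le> b" "0 \<le> d"
    and "koenigs_equation e (1 / (2 + a)) (1 / (2 + b)) (1 / (2 + d))"
  shows "koenigs_equation (- (sqrt 2 - 1)\<^sup>2 * e) a b d"
proof -
  define k where "k = - (sqrt 2 - 1)\<^sup>2"
  have "k \<noteq> 0" using sqrt_2_bounds by (simp add: k_def)
  have "koenigs (1 / (2 + t)) = k * koenigs t" if "0 \<le> t" for t
    using koenigs_recip_two_add[OF that] by (simp add: k_def)
  with assms have "k * (defect 3 (k * e) (koenigs a) + defect 3 (k * e) (koenigs b)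
      + defect 2 (k * e) (koenigs d)) = 0"
    by (simp add: koenigs_equation_def defect_scale distrib_left)
  with \<open>k \<noteq> 0\<close> show ?thesis by (simp add: koenigs_equation_def k_def)
qed

lemma recip_diff_mono:
  fixes A x y :: real
  assumes "0 < A + x" "x \<le> y"
  shows "1 / A - 1 / (A + x) \<le> 1 / A - 1 / (A + y)"
  using assms by (simp add: frac_le)

lemma recip_diff_interval:
  fixes A Al Au x :: real
  assumes "0 < Al + x" "Al \<le> A" "A \<le> Au" "0 < Al"
  shows "1 / Au - 1 / (Al + x) \<le> 1 / A - 1 / (A + x)"
  using assms frac_le[of 1 1 A Au] frac_le[of 1 1 "Al + x" "A + x"] by simp

(* koenigs is at least -0.01735 on bounded_cf 2 0, and at least 0.0544 at its points with
   first digit 1. *)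
lemma defect_sum_pos:
  assumes e: "\<bar>e\<bar> \<le> 1"
    and lower: "-1735 / 100000 \<le> p" "-1735 / 100000 \<le> q" "-1735 / 100000 \<le> r"
    and abs: "\<bar>p\<bar> \<le> 1" "\<bar>q\<bar> \<le> 1" "\<bar>r\<bar> \<le> 1"
    and large: "544 / 10000 \<le> p \<or> 544 / 10000 \<le> r"
  shows "0 < defect 3 e p + defect 3 e q + defect 2 e r"
proof -
  define g where "g n x = 1 / (n + sqrt 2 - 1) - 1 / (n + sqrt 2 - 1 + x)" for n x :: real
  have "\<bar>(sqrt 2 + 1 - n) * e\<bar> \<le> 1" if "n = 2 \<or> n = 3" for n
    using that e sqrt_2_bounds by (auto simp: abs_mult intro!: mult_le_one)
  then have "g n x \<le> defect n e x" if "n = 2 \<or> n = 3" "\<bar>x\<bar> \<le> 1" for n x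
    unfolding g_def using that sqrt_2_bounds by (intro defect_lower_bound) auto
  then have defect_ge: "g 3 p \<le> defect 3 e p" "g 3 q \<le> defect 3 e q" "g 2 r \<le> defect 2 e r"
    using abs by simp_all
  have "g n x \<le> g n y" if "n = 2 \<or> n = 3" "-1735 / 100000 \<le> x" "x \<le> y" for n x y
    unfolding g_def using that sqrt_2_bounds by (intro recip_diff_mono) auto
  then have g_mono: "g 3 (-1735 / 100000) \<le> g 3 p" "g 3 (-1735 / 100000) \<le> g 3 q"
    "g 2 (-1735 / 100000) \<le> g 2 r" "544 / 10000 \<le> p \<Longrightarrow> g 3 (544 / 10000) \<le> g 3 p"
    "544 / 10000 \<le> r \<Longrightarrow> g 2 (544 / 10000) \<le> g 2 r"
    using lower by simp_all
  have interval: "1 / (n + 41422 / 100000) - 1 / (n + 41421 / 100000 + x) \<le> g n x"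
    if "n = 2 \<or> n = 3" "-1735 / 100000 \<le> x" for n x
    unfolding g_def using that sqrt_2_bounds by (intro recip_diff_interval) auto
  have g_interval: "45927 / 10000000 \<le> g 3 (544 / 10000)" "-14969 / 10000000 \<le> g 3 (-1735 / 100000)"
    "-30001 / 10000000 \<le> g 2 (-1735 / 100000)" "9126 / 1000000 \<le> g 2 (544 / 10000)"
    using interval[of 3 "544 / 10000"] interval[of 3 "-1735 / 100000"]
      interval[of 2 "-1735 / 100000"] interval[of 2 "544 / 10000"]
    by simp_all
  from large show ?thesis
  proof
    assume "544 / 10000 \<le> p"
    with defect_ge g_mono(2,3,4) g_interval(1-3) show ?thesis by linarith
  next
    assume "544 / 10000 \<le> r"
    with defect_ge g_mono(1,2,5) g_interval(2,4) show ?thesis by linarith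
  qed
qed

section \<open>Rigidity of 1/(3+a) + 1/(3+b) + 1/(2+d) = 1\<close>

lemma bounded_cf_2_0_bounds_numeric:
  assumes "t \<in> bounded_cf 2 0"
  shows "366 / 1000 < t" "t < 7321 / 10000"
  using bounded_cf_2_0_bounds[OF assms] sqrt_3_bounds by (simp_all add: field_simps)

lemma koenigs_lower_bound:
  assumes "366 / 1000 \<le> t"
  shows "-1735 / 100000 \<le> koenigs t"
proof -
  have "2 * sqrt 2 / (366 / 1000 + (sqrt 2 + 1)) \<le> 1 + 1735 / 100000"
    using sqrt_2_bounds by (simp add: divide_le_eq)
  then have "-1735 / 100000 \<le> koenigs (366 / 1000)"
    by (simp add: koenigs_eq)
  also have "\<dots> \<le> koenigs t"
    using assms by (simp add: koenigs_mono)
  finally show ?thesis .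
qed

lemma koenigs_first_digit_one:
  assumes "g \<in> bounded_cf 2 0"
  shows "544 / 10000 \<le> koenigs (1 / (1 + g))"
proof -
  have "2 * sqrt 2 / (577 / 1000 + (sqrt 2 + 1)) \<le> 1 - 544 / 10000"
    using sqrt_2_bounds by (simp add: divide_le_eq)
  then have "544 / 10000 \<le> koenigs (577 / 1000)"
    by (simp add: koenigs_eq)
  also have "\<dots> \<le> koenigs (1 / (1 + g))"
    using bounded_cf_2_0_bounds_numeric[OF assms]
    by (intro koenigs_mono) (simp_all add: field_simps)
  finally show ?thesis .
qed

lemma bounded_cf_2_0_koenigs:
  assumes "t \<in> bounded_cf 2 0"
  shows "-1735 / 100000 \<le> koenigs t" "\<bar>koenigs t\<bar> \<le> 1"
  using bounded_cf_2_0_bounds_numeric[OF assms] koenigs_lower_bound abs_koenigs_le_1 by simp_all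

lemma bounded_cf_2_0_first_digit_two:
  assumes "t \<in> bounded_cf 2 0" "koenigs t < 544 / 10000"
  obtains g where "g \<in> bounded_cf 2 0" "t = 1 / (2 + g)"
proof -
  obtain g where g: "g \<in> bounded_cf 2 0" "t = 1 / (1 + g) \<or> t = 1 / (2 + g)"
    using bounded_cf_2_0_cases[OF assms(1)] by blast
  have "t \<noteq> 1 / (1 + g)"
    using koenigs_first_digit_one[OF g(1)] assms(2) by auto
  with g that show thesis by blast
qed

lemma koenigs_equation_step:
  assumes e: "\<bar>e\<bar> \<le> 1"
    and abd: "a \<in> bounded_cf 2 0" "b \<in> bounded_cf 2 0" "d \<in> bounded_cf 2 0"
    and eq: "koenigs_equation e a b d"
  obtains a' b' d' where "a' \<in> bounded_cf 2 0" "b' \<in> bounded_cf 2 0" "d' \<in> bounded_cf 2 0"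
    "a = 1 / (2 + a')" "b = 1 / (2 + b')" "d = 1 / (2 + d')"
    "koenigs_equation (- (sqrt 2 - 1)\<^sup>2 * e) a' b' d'"
proof -
  note ka = bounded_cf_2_0_koenigs[OF abd(1)] and kb = bounded_cf_2_0_koenigs[OF abd(2)]
    and kd = bounded_cf_2_0_koenigs[OF abd(3)]
  have sum: "defect 3 e (koenigs a) + defect 3 e (koenigs b) + defect 2 e (koenigs d) = 0"
    "defect 3 e (koenigs b) + defect 3 e (koenigs a) + defect 2 e (koenigs d) = 0"
    using eq by (simp_all add: koenigs_equation_def)
  have "koenigs a < 544 / 10000" "koenigs b < 544 / 10000" "koenigs d < 544 / 10000"
    using defect_sum_pos[OF e ka(1) kb(1) kd(1) ka(2) kb(2) kd(2)]
      defect_sum_pos[OF e kb(1) ka(1) kd(1) kb(2) ka(2) kd(2)] sum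
    by (auto simp: not_less[symmetric])
  then obtain a' b' d' where
    "a' \<in> bounded_cf 2 0" "b' \<in> bounded_cf 2 0" "d' \<in> bounded_cf 2 0"
    "a = 1 / (2 + a')" "b = 1 / (2 + b')" "d = 1 / (2 + d')"
    using bounded_cf_2_0_first_digit_two abd by metis
  moreover from this have "koenigs_equation (- (sqrt 2 - 1)\<^sup>2 * e) a' b' d'"
    using eq bounded_cf_pos by (intro koenigs_equation_pullback) (auto intro: less_imp_le)
  ultimately show thesis using that by blast
qed

lemma koenigs_equation_decay:
  assumes "\<bar>e\<bar> \<le> 1" "a \<in> bounded_cf 2 0" "b \<in> bounded_cf 2 0" "d \<in> bounded_cf 2 0"
    and "koenigs_equation e a b d"
  shows "\<bar>koenigs a\<bar> \<le> ((sqrt 2 - 1)\<^sup>2) ^ n \<and> \<bar>koenigs b\<bar> \<le> ((sqrt 2 - 1)\<^sup>2) ^ n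
    \<and> \<bar>koenigs d\<bar> \<le> ((sqrt 2 - 1)\<^sup>2) ^ n"
  using assms
proof (induction n arbitrary: e a b d)
  case 0
  then show ?case using bounded_cf_2_0_koenigs by simp
next
  case (Suc n)
  define k :: real where "k = (sqrt 2 - 1)\<^sup>2"
  have k: "0 \<le> k" "k \<le> 1"
    using sqrt_2_bounds by (simp_all add: k_def power2_eq_square mult_le_one)
  obtain a' b' d' where abd': "a' \<in> bounded_cf 2 0" "b' \<in> bounded_cf 2 0" "d' \<in> bounded_cf 2 0"
    and abd: "a = 1 / (2 + a')" "b = 1 / (2 + b')" "d = 1 / (2 + d')"
    and eq': "koenigs_equation (- k * e) a' b' d'"
    using koenigs_equation_step[OF Suc.prems] unfolding k_def by blast
  have "\<bar>- k * e\<bar> \<le> 1"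
    using k Suc.prems(1) by (simp add: abs_mult mult_le_one)
  note IH = Suc.IH[OF this abd' eq']
  have "\<bar>koenigs (1 / (2 + t))\<bar> = k * \<bar>koenigs t\<bar>" if "t \<in> bounded_cf 2 0" for t
    using koenigs_recip_two_add[of t] bounded_cf_2_0_bounds_numeric[OF that] k
    by (simp add: k_def abs_mult)
  with abd abd' IH k show ?case
    unfolding k_def[symmetric] by (auto intro: mult_left_mono)
qed

lemma abs_le_power_imp_zero:
  fixes x q :: real
  assumes "q < 1" "\<And>n. \<bar>x\<bar> \<le> q ^ n"
  shows "x = 0"
proof (rule ccontr)
  assume "x \<noteq> 0"
  then obtain n where "q ^ n < \<bar>x\<bar>"
    using real_arch_pow_inv[of "\<bar>x\<bar>" q] assms(1) by auto
  with assms(2)[of n] show False by simp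
qed

lemma recip_sum_eq_1_imp_silver:
  assumes "a \<in> bounded_cf 2 0" "b \<in> bounded_cf 2 0" "d \<in> bounded_cf 2 0"
    and "1 / (3 + a) + 1 / (3 + b) + 1 / (2 + d) = 1"
  shows "a = sqrt 2 - 1" "b = sqrt 2 - 1" "d = sqrt 2 - 1"
proof -
  have nonneg: "0 \<le> a" "0 \<le> b" "0 \<le> d"
    using assms(1-3) by (auto dest: bounded_cf_pos)
  have "(sqrt 2 - 1)\<^sup>2 < 1"
    using sqrt_2_bounds by (simp add: power2_eq_square algebra_simps)
  with koenigs_equation_decay[OF _ assms(1-3) koenigs_equation_1[OF nonneg assms(4)]]
  have "koenigs a = 0" "koenigs b = 0" "koenigs d = 0"
    by (auto intro: abs_le_power_imp_zero)
  with nonneg show "a = sqrt 2 - 1" "b = sqrt 2 - 1" "d = sqrt 2 - 1"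
    by (simp_all add: koenigs_eq_0_iff)
qed

lemma bounded_cf_2_0_recip_bounds_numeric:
  assumes "g \<in> bounded_cf 2 0"
  shows "5773 / 10000 < 1 / (1 + g)" "1 / (1 + g) < 7321 / 10000"
    "366 / 1000 < 1 / (2 + g)" "1 / (2 + g) < 4227 / 10000"
    "2679 / 10000 < 1 / (3 + g)" "1 / (3 + g) < 2971 / 10000"
  using bounded_cf_2_0_bounds_numeric[OF assms] by (simp_all add: field_simps)

lemma recip_one_add_recip:
  fixes t :: real
  assumes "0 \<le> t"
  shows "1 / (1 + 1 / (1 + t)) = 1 - 1 / (2 + t)" "1 / (1 + 1 / (2 + t)) = 1 - 1 / (3 + t)"
  using assms by (simp_all add: field_simps)

lemma sqrt_3_values:
  "1 / (3 + (sqrt 3 - 1)) = 2 - sqrt 3"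
  "1 / (2 + (sqrt 3 - 1)) = (sqrt 3 - 1) / 2"
  "1 / (1 + (sqrt 3 - 1) / 2) = sqrt 3 - 1"
  "1 - 1 / (2 + (sqrt 3 - 1)) = (3 - sqrt 3) / 2"
  using sqrt_3_bounds by (simp_all add: field_simps)

lemma sqrt_2_values:
  "1 / (3 + (sqrt 2 - 1)) = (2 - sqrt 2) / 2"
  "1 / (2 + (sqrt 2 - 1)) = sqrt 2 - 1"
  "1 - 1 / (3 + (sqrt 2 - 1)) = sqrt 2 / 2"
  "1 - 1 / (2 + (sqrt 2 - 1)) = 2 - sqrt 2"
  using sqrt_2_bounds by (simp_all add: field_simps)

lemma bounded_cf_2_0_recip_bounds:
  assumes "g \<in> bounded_cf 2 0"
  shows "2 - sqrt 3 \<le> 1 / (3 + g)" "(sqrt 3 - 1) / 2 \<le> 1 / (2 + g)" "1 / (1 + g) \<le> sqrt 3 - 1"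
proof -
  note g = bounded_cf_2_0_bounds[OF assms] bounded_cf_pos[OF assms]
  have "2 - sqrt 3 = 1 / (3 + (sqrt 3 - 1))" by (rule sqrt_3_values(1)[symmetric])
  also have "\<dots> \<le> 1 / (3 + g)" using g by (intro frac_le) auto
  finally show "2 - sqrt 3 \<le> 1 / (3 + g)" .
  have "(sqrt 3 - 1) / 2 = 1 / (2 + (sqrt 3 - 1))" by (rule sqrt_3_values(2)[symmetric])
  also have "\<dots> \<le> 1 / (2 + g)" using g by (intro frac_le) auto
  finally show "(sqrt 3 - 1) / 2 \<le> 1 / (2 + g)" .
  have "1 / (1 + g) \<le> 1 / (1 + (sqrt 3 - 1) / 2)"
    using g sqrt_3_bounds by (intro frac_le) (auto simp: field_simps)
  also have "\<dots> = sqrt 3 - 1" by (rule sqrt_3_values(3))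
  finally show "1 / (1 + g) \<le> sqrt 3 - 1" .
qed

lemma sum_solution_2_2:
  assumes "u \<in> bounded_cf 2 0" "v \<in> bounded_cf 2 0" "w \<in> bounded_cf 2 0"
    and "1 / (2 + u) + 1 / (2 + v) = 1 / (1 + w)"
  shows "1 / (2 + u) = (sqrt 3 - 1) / 2 \<and> 1 / (2 + v) = (sqrt 3 - 1) / 2 \<and> 1 / (1 + w) = sqrt 3 - 1"
proof -
  have "(sqrt 3 - 1) / 2 + (sqrt 3 - 1) / 2 = sqrt 3 - 1" by simp
  with assms(4) bounded_cf_2_0_recip_bounds[OF assms(1)] bounded_cf_2_0_recip_bounds[OF assms(2)]
    bounded_cf_2_0_recip_bounds[OF assms(3)]
  show ?thesis by linarith
qed

lemma sum_solution_3_2: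
  assumes "u \<in> bounded_cf 2 0" "v \<in> bounded_cf 2 0" "w \<in> bounded_cf 2 0"
    and sum: "1 / (3 + u) + 1 / (2 + v) = 1 / (1 + w)"
  shows "(1 / (3 + u), 1 / (2 + v), 1 / (1 + w)) = (2 - sqrt 3, (sqrt 3 - 1) / 2, (3 - sqrt 3) / 2)
    \<or> (1 / (3 + u), 1 / (2 + v), 1 / (1 + w)) = ((2 - sqrt 2) / 2, sqrt 2 - 1, sqrt 2 / 2)"
proof -
  obtain w' where w': "w' \<in> bounded_cf 2 0" "w = 1 / (1 + w') \<or> w = 1 / (2 + w')"
    using bounded_cf_2_0_cases[OF assms(3)] by blast
  have "0 < w'" using bounded_cf_pos[OF w'(1)] .
  from w'(2) show ?thesis
  proof
    assume "w = 1 / (1 + w')"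
    then have "1 / (1 + w) = 1 - 1 / (2 + w')"
      using recip_one_add_recip(1)[of w'] \<open>0 < w'\<close> by simp
    moreover have "(2 - sqrt 3) + (sqrt 3 - 1) / 2 = 1 - (sqrt 3 - 1) / 2"
      by (simp add: field_simps)
    moreover have "1 - (sqrt 3 - 1) / 2 = (3 - sqrt 3) / 2"
      by (simp add: field_simps)
    ultimately show ?thesis
      using sum bounded_cf_2_0_recip_bounds[OF assms(1)] bounded_cf_2_0_recip_bounds[OF assms(2)]
        bounded_cf_2_0_recip_bounds[OF w'(1)]
      by auto
  next
    assume "w = 1 / (2 + w')"
    then have "1 / (1 + w) = 1 - 1 / (3 + w')"
      using recip_one_add_recip(2)[of w'] \<open>0 < w'\<close> by simp
    with sum have "1 / (3 + u) + 1 / (3 + w') + 1 / (2 + v) = 1" by simp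
    then have "u = sqrt 2 - 1" "v = sqrt 2 - 1" "w' = sqrt 2 - 1"
      using recip_sum_eq_1_imp_silver[OF assms(1) w'(1) assms(2)] by simp_all
    with \<open>1 / (1 + w) = 1 - 1 / (3 + w')\<close> show ?thesis
      using sqrt_2_values by simp
  qed
qed

lemma sum_solution_3_3:
  assumes "u \<in> bounded_cf 2 0" "v \<in> bounded_cf 2 0" "w \<in> bounded_cf 2 0"
    and sum: "1 / (3 + u) + 1 / (3 + v) = 1 / (1 + w)"
  shows "1 / (3 + u) = (2 - sqrt 2) / 2 \<and> 1 / (3 + v) = (2 - sqrt 2) / 2 \<and> 1 / (1 + w) = 2 - sqrt 2"
proof -
  obtain w' where w': "w' \<in> bounded_cf 2 0" "w = 1 / (1 + w') \<or> w = 1 / (2 + w')"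
    using bounded_cf_2_0_cases[OF assms(3)] by blast
  have "0 < w'" using bounded_cf_pos[OF w'(1)] .
  have "w \<noteq> 1 / (2 + w')"
  proof
    assume "w = 1 / (2 + w')"
    then have "1 / (1 + w) = 1 - 1 / (3 + w')"
      using recip_one_add_recip(2)[of w'] \<open>0 < w'\<close> by simp
    with sum bounded_cf_2_0_recip_bounds_numeric[OF assms(1)]
      bounded_cf_2_0_recip_bounds_numeric[OF assms(2)] bounded_cf_2_0_recip_bounds_numeric[OF w'(1)]
    show False by linarith
  qed
  with w'(2) have "1 / (1 + w) = 1 - 1 / (2 + w')"
    using recip_one_add_recip(1)[of w'] \<open>0 < w'\<close> by simp
  with sum have "1 / (3 + u) + 1 / (3 + v) + 1 / (2 + w') = 1" by simp
  then have "u = sqrt 2 - 1" "v = sqrt 2 - 1" "w' = sqrt 2 - 1"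
    using recip_sum_eq_1_imp_silver[OF assms(1,2) w'(1)] by simp_all
  with \<open>1 / (1 + w) = 1 - 1 / (2 + w')\<close> show ?thesis
    using sqrt_2_values by simp
qed

definition sum_solutions :: "(real \<times> real \<times> real) set" where
  "sum_solutions =
     {(2 - sqrt 3, (sqrt 3 - 1) / 2, (3 - sqrt 3) / 2),
      ((sqrt 3 - 1) / 2, (sqrt 3 - 1) / 2, sqrt 3 - 1),
      ((2 - sqrt 2) / 2, (2 - sqrt 2) / 2, 2 - sqrt 2),
      ((2 - sqrt 2) / 2, sqrt 2 - 1, sqrt 2 / 2)}"

lemma bounded_cf_2_1_sum_solutions:
  assumes "x \<in> bounded_cf 2 1" "y \<in> bounded_cf 2 1" "z \<in> bounded_cf 2 1"
    and le: "x \<le> y" and sum: "x + y = z"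
  shows "(x, y, z) \<in> sum_solutions"
proof -
  obtain u where u: "u \<in> bounded_cf 2 0" "x = 1 / (1 + u) \<or> x = 1 / (2 + u) \<or> x = 1 / (3 + u)"
    using bounded_cf_2_1_cases[OF assms(1)] by blast
  obtain v where v: "v \<in> bounded_cf 2 0" "y = 1 / (1 + v) \<or> y = 1 / (2 + v) \<or> y = 1 / (3 + v)"
    using bounded_cf_2_1_cases[OF assms(2)] by blast
  obtain w where w: "w \<in> bounded_cf 2 0" "z = 1 / (1 + w) \<or> z = 1 / (2 + w) \<or> z = 1 / (3 + w)"
    using bounded_cf_2_1_cases[OF assms(3)] by blast
  note bounds = bounded_cf_2_0_recip_bounds_numeric[OF u(1)]
    bounded_cf_2_0_recip_bounds_numeric[OF v(1)] bounded_cf_2_0_recip_bounds_numeric[OF w(1)]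
  have z: "z = 1 / (1 + w)"
    using u(2) v(2) w(2) bounds sum by (elim disjE) linarith+
  have "x \<noteq> 1 / (1 + u)" "y \<noteq> 1 / (1 + v)" "\<not> (x = 1 / (2 + u) \<and> y = 1 / (3 + v))"
    using u(2) v(2) z bounds sum le by linarith+
  with u(2) v(2) consider
      "x = 1 / (2 + u)" "y = 1 / (2 + v)"
    | "x = 1 / (3 + u)" "y = 1 / (2 + v)"
    | "x = 1 / (3 + u)" "y = 1 / (3 + v)"
    by blast
  then show ?thesis
  proof cases
    case 1
    with sum_solution_2_2[OF u(1) v(1) w(1)] sum z show ?thesis by (simp add: sum_solutions_def)
  next
    case 2
    with sum_solution_3_2[OF u(1) v(1) w(1)] sum z show ?thesis by (auto simp: sum_solutions_def)
  next
    case 3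
    with sum_solution_3_3[OF u(1) v(1) w(1)] sum z show ?thesis by (simp add: sum_solutions_def)
  qed
qed

lemma solutions_mem_bounded_cf_2_1:
  "2 - sqrt 3 \<in> bounded_cf 2 1" "(sqrt 3 - 1) / 2 \<in> bounded_cf 2 1"
  "(3 - sqrt 3) / 2 \<in> bounded_cf 2 1" "sqrt 3 - 1 \<in> bounded_cf 2 1"
  "(2 - sqrt 2) / 2 \<in> bounded_cf 2 1" "2 - sqrt 2 \<in> bounded_cf 2 1"
  "sqrt 2 - 1 \<in> bounded_cf 2 1" "sqrt 2 / 2 \<in> bounded_cf 2 1"
proof -
  note E = sqrt_3_cycle_mem_bounded_cf silver_mem_bounded_cf
  note mem = recip_add_mem_bounded_cf
  have sub: "x \<in> bounded_cf 2 1" if "x \<in> bounded_cf 2 0" for x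
    using that bounded_cf_mono[of 0 1 2] by blast
  have "0 \<le> sqrt 3 - 1" "0 \<le> sqrt 2 - 1" using sqrt_3_bounds sqrt_2_bounds by simp_all
  note nested = recip_one_add_recip[OF this(1)] recip_one_add_recip[OF this(2)]
  have unfold:
    "(3 - sqrt 3) / 2 = 1 / (1 + 1 / (1 + (sqrt 3 - 1)))"
    "2 - sqrt 2 = 1 / (1 + 1 / (1 + (sqrt 2 - 1)))"
    "sqrt 2 / 2 = 1 / (1 + 1 / (2 + (sqrt 2 - 1)))"
    unfolding nested by (simp_all only: sqrt_3_values(4) sqrt_2_values(3,4))
  show "(sqrt 3 - 1) / 2 \<in> bounded_cf 2 1" "sqrt 3 - 1 \<in> bounded_cf 2 1"
    "sqrt 2 - 1 \<in> bounded_cf 2 1"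
    using sub E by blast+
  show "2 - sqrt 3 \<in> bounded_cf 2 1"
    using mem(3)[OF E(2)] unfolding sqrt_3_values(1) .
  show "(2 - sqrt 2) / 2 \<in> bounded_cf 2 1"
    using mem(3)[OF E(3)] unfolding sqrt_2_values(1) .
  show "(3 - sqrt 3) / 2 \<in> bounded_cf 2 1"
    unfolding unfold(1) by (rule sub mem(1) E(2))+
  show "2 - sqrt 2 \<in> bounded_cf 2 1"
    unfolding unfold(2) by (rule sub mem(1) E(3))+
  show "sqrt 2 / 2 \<in> bounded_cf 2 1"
    unfolding unfold(3) by (rule sub mem(1,2) E(3))+
qed

lemma sum_solutions_sound:
  assumes "(x, y, z) \<in> sum_solutions"
  shows "x \<in> bounded_cf 2 1 \<and> y \<in> bounded_cf 2 1 \<and> z \<in> bounded_cf 2 1 \<and> x \<le> y \<and> x + y = z"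
proof -
  have "2 - sqrt 3 \<le> (sqrt 3 - 1) / 2" "(2 - sqrt 2) / 2 \<le> sqrt 2 - 1"
    using sqrt_3_bounds sqrt_2_bounds by (simp_all add: field_simps)
  moreover have "(2 - sqrt 3) + (sqrt 3 - 1) / 2 = (3 - sqrt 3) / 2"
    "(sqrt 3 - 1) / 2 + (sqrt 3 - 1) / 2 = sqrt 3 - 1"
    "(2 - sqrt 2) / 2 + (2 - sqrt 2) / 2 = 2 - sqrt 2"
    "(2 - sqrt 2) / 2 + (sqrt 2 - 1) = sqrt 2 / 2"
    by (simp_all add: field_simps)
  ultimately show ?thesis
    using assms solutions_mem_bounded_cf_2_1 unfolding sum_solutions_def
    by (auto simp only: insert_iff empty_iff prod.inject)
qed

theorem mainTheorem7:
  shows "{(x, y, z). x \<in> bounded_cf 2 1 \<and> y \<in> bounded_cf 2 1 \<and> z \<in> bounded_cf 2 1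
            \<and> x \<le> y \<and> x + y = z} =
         {(2 - sqrt 3, (sqrt 3 - 1) / 2, (3 - sqrt 3) / 2),
          ((sqrt 3 - 1) / 2, (sqrt 3 - 1) / 2, sqrt 3 - 1),
          ((2 - sqrt 2) / 2, (2 - sqrt 2) / 2, 2 - sqrt 2),
          ((2 - sqrt 2) / 2, sqrt 2 - 1, sqrt 2 / 2)}"
  (is "?L = _")
proof (fold sum_solutions_def, intro equalityI subsetI)
  fix t :: "real \<times> real \<times> real"
  obtain x y z where t: "t = (x, y, z)" by (rule prod_cases3)
  show "t \<in> sum_solutions" if "t \<in> ?L"
    using that bounded_cf_2_1_sum_solutions unfolding t by blast
  show "t \<in> ?L" if "t \<in> sum_solutions"
    using that sum_solutions_sound unfolding t by blast
qed

end
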